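(* Let $h\in D$ be a fixed energy level and let $z_0\in\Gamma_0\cap M_h$, where $M_h=\{H_0=h\}$. Then: (i) the angle mismatch $\theta^s(z_0)-\theta^u(z_0)$ is a constant depending only on $h$ (denote it $\theta^s(h)-\theta^u(h)$); (ii) the scattering map $\sigma_0$ associated to $\Gamma_0$ is given, in the action-angle coordinates $(I,\theta)$ on $\Lambda_0$, by $\sigma_0(I,\theta)=(I,\theta+\Delta(I))$, where $\Delta(I)=\theta^s(h)-\theta^u(h)$ for $I=I_h$.
   Context: $(M,\Omega)$ is a real-analytic symplectic manifold; $H_0$ real-analytic with Hamiltonian flow $\Phi^t_0$. There is a saddle-center equilibrium $L$ and a family of Lyapunov periodic orbits $\lambda_0(h)\subset\{H_0=h\}$; $\Lambda_0=\bigcup_{h\in D}\lambda_0(h)$ ($D$ a closed interval) is a 2-dimensional normally hyperbolic invariant manifold with boundary, parametrized by symplectic action-angle coordinates $(I,\theta)$, with $\lambda_0(h)=\{I=I_h\}$ and the flow on each $\lambda_0(h)$ a rigid rotation in $\theta$. For $z$ in the unstable (resp. stable) manifold $W^u(\Lambda_0)$ (resp. $W^s(\Lambda_0)$), $z^-=\Omega^-(z)$ (resp. $z^+=\Omega^+(z)$) is the point of $\Lambda_0$ whose unstable (resp. stable) fiber contains $z$; these projections are equivariant: $\Omega^\pm(\Phi^t_0 z)=\Phi^t_0(\Omega^\pm z)$. $W^u(\Lambda_0)$ and $W^s(\Lambda_0)$ intersect transversally along a homoclinic channel $\Gamma_0$: a submanifold with $T_z\Gamma_0=T_zW^u\cap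 T_zW^s$, $T_zM=T_z\Gamma_0\oplus T_zW^u(z^-)\oplus T_zW^s(z^+)$, on which $\Omega^\pm$ are diffeomorphisms onto open sets $U^\pm\subset\Lambda_0$; the scattering map is $\sigma_0=\Omega^+\circ(\Omega^-|_{\Gamma_0})^{-1}:U^-\to U^+$, and for each $h$, $\Gamma_0\cap M_h$ consists of points $\Phi^t_0(z_0)$, $t$ in an interval containing $0$. Coordinates: $(I^u,\theta^u,y^u,x^u)$ are symplectic coordinates on a neighborhood of $W^u(\Lambda_0)$ and $(I^s,\theta^s,y^s,x^s)$ on a neighborhood of $W^s(\Lambda_0)$, both coinciding with the normal form coordinates $(I,\theta,y,x)$ near $\Lambda_0$ (where $\Lambda_0=\{x=y=0\}$ and $(I,\theta)$ restrict to the action-angle coordinates), with $I^u(z)=I^u(z^-)$, $\theta^u(z)=\theta^u(z^-)$ for $z\in W^u(\Lambda_0)$ and $I^s(z)=I^s(z^+)$, $\theta^s(z)=\theta^s(z^+)$ for $z\in W^s(\Lambda_0)$. *)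

theory Defs
  imports "HOL-Analysis.Analysis"
begin

definition angle_eq :: "real \<Rightarrow> real \<Rightarrow> bool" where
  "angle_eq x y \<longleftrightarrow> (\<exists>k::int. x - y = 2 * pi * of_int k)"

definition Ws_fib :: "(real \<Rightarrow> 'm::metric_space \<Rightarrow> 'm) \<Rightarrow> 'm \<Rightarrow> 'm set" where
  "Ws_fib Phi p = {z. ((\<lambda>t. dist (Phi t z) (Phi t p)) \<longlongrightarrow> 0) at_top}"

definition Wu_fib :: "(real \<Rightarrow> 'm::metric_space \<Rightarrow> 'm) \<Rightarrow> 'm \<Rightarrow> 'm set" where
  "Wu_fib Phi p = {z. ((\<lambda>t. dist (Phi t z) (Phi t p)) \<longlongrightarrow> 0) at_bot}"

definition Ws_set :: "(real \<Rightarrow> 'm::metric_space \<Rightarrow> 'm) \<Rightarrow> 'm set \<Rightarrow> 'm set" where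
  "Ws_set Phi L = (\<Union>p\<in>L. Ws_fib Phi p)"

definition Wu_set :: "(real \<Rightarrow> 'm::metric_space \<Rightarrow> 'm) \<Rightarrow> 'm set \<Rightarrow> 'm set" where
  "Wu_set Phi L = (\<Union>p\<in>L. Wu_fib Phi p)"

definition Omega_plus :: "(real \<Rightarrow> 'm::metric_space \<Rightarrow> 'm) \<Rightarrow> 'm set \<Rightarrow> 'm \<Rightarrow> 'm" where
  "Omega_plus Phi L z = (THE p. p \<in> L \<and> z \<in> Ws_fib Phi p)"

definition Omega_minus :: "(real \<Rightarrow> 'm::metric_space \<Rightarrow> 'm) \<Rightarrow> 'm set \<Rightarrow> 'm \<Rightarrow> 'm" where
  "Omega_minus Phi L z = (THE p. p \<in> L \<and> z \<in> Wu_fib Phi p)"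

definition scattering :: "(real \<Rightarrow> 'm::metric_space \<Rightarrow> 'm) \<Rightarrow> 'm set \<Rightarrow> 'm set \<Rightarrow> 'm \<Rightarrow> 'm" where
  "scattering Phi L G = Omega_plus Phi L \<circ> inv_into G (Omega_minus Phi L)"

end

theory Submission
  imports Defs
begin

text \<open>The wave maps commute with the flow, and the part of the channel in the level \<open>H = h\<close>
  is a single orbit through \<open>z0\<close>. So the base points of any such point are the images of those
  of \<open>z0\<close> under one flow map, which rotates the circle \<open>\<lambda>(h)\<close> rigidly and therefore preserves
  their angle difference. Since \<open>\<Lambda>\<close> is compact, a point has the energy of its asymptotic base
  points; hence the scattering map sends \<open>\<lambda>(h)\<close> to itself, shifting the angle by that constant.\<close>

lemma asymptotic_orbits_same_energy:
  fixes Phi :: "real \<Rightarrow> 'm::metric_space \<Rightarrow> 'm" and H :: "'m \<Rightarrow> real"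
  assumes H_cont: "continuous_on UNIV H" and H_inv: "\<And>t z. H (Phi t z) = H z"
    and "compact K" and orbit: "\<And>t. Phi t p \<in> K"
    and lim: "((\<lambda>t. dist (Phi t z) (Phi t p)) \<longlongrightarrow> 0) F" and "F \<noteq> bot"
  shows "H z = H p"
proof (rule ccontr)
  assume "H z \<noteq> H p"
  define S where "S = {w. H w = H z}"
  define K' where "K' = K \<inter> {w. H w = H p}"
  have "closed S" "closed {w. H w = H p}"
    unfolding S_def by (intro closed_Collect_eq H_cont continuous_on_const)+
  then have "compact K'" unfolding K'_def using \<open>compact K\<close> by (simp add: compact_Int_closed)
  have in_S: "Phi t z \<in> S" and in_K': "Phi t p \<in> K'" for t
    unfolding S_def K'_def using orbit H_inv by auto
  have "setdist K' S > 0"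
    using \<open>compact K'\<close> \<open>closed S\<close> \<open>H z \<noteq> H p\<close> in_S in_K'
    by (subst setdist_gt_0_compact_closed) (auto simp: S_def K'_def)
  have setdist_le: "setdist K' S \<le> dist (Phi t z) (Phi t p)" for t
    using in_S in_K' by (metis dist_commute setdist_le_dist)
  from lim \<open>setdist K' S > 0\<close> have "\<forall>\<^sub>F t in F. dist (Phi t z) (Phi t p) < setdist K' S"
    by (rule order_tendstoD)
  then have "\<forall>\<^sub>F t in F. False"
    by (rule eventually_mono) (use setdist_le leD in blast)
  with \<open>F \<noteq> bot\<close> show False by (simp add: eventually_False)
qed

lemma Wu_fib_reversed: "Wu_fib Phi = Ws_fib (\<lambda>t. Phi (- t))"
  by (simp add: fun_eq_iff Wu_fib_def Ws_fib_def filterlim_at_bot_mirror)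

lemma Wu_set_reversed: "Wu_set Phi = Ws_set (\<lambda>t. Phi (- t))"
  by (simp add: fun_eq_iff Wu_set_def Ws_set_def Wu_fib_reversed)

lemma Omega_minus_reversed: "Omega_minus Phi = Omega_plus (\<lambda>t. Phi (- t))"
  by (simp add: fun_eq_iff Omega_minus_def Omega_plus_def Wu_fib_reversed)

lemma Ws_fib_flow:
  assumes flow_add: "\<And>s t z. Phi (s + t) z = Phi s (Phi t z)"
    and "z \<in> Ws_fib Phi p"
  shows "Phi t z \<in> Ws_fib Phi (Phi t p)"
proof -
  have "((\<lambda>s. dist (Phi s z) (Phi s p)) \<longlongrightarrow> 0) at_top"
    using \<open>z \<in> Ws_fib Phi p\<close> by (simp add: Ws_fib_def)
  from filterlim_compose[OF this filterlim_tendsto_add_at_top[OF tendsto_const filterlim_ident]]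
  have "((\<lambda>s. dist (Phi (t + s) z) (Phi (t + s) p)) \<longlongrightarrow> 0) at_top" .
  then show ?thesis by (simp add: Ws_fib_def flow_add add.commute)
qed

locale stable_fibration =
  fixes Phi :: "real \<Rightarrow> 'm::metric_space \<Rightarrow> 'm" and L :: "'m set"
  assumes flow_add: "\<And>s t z. Phi (s + t) z = Phi s (Phi t z)"
    and invariant: "\<And>t p. p \<in> L \<Longrightarrow> Phi t p \<in> L"
    and fibres_disjoint:
      "\<And>p q z. p \<in> L \<Longrightarrow> q \<in> L \<Longrightarrow> z \<in> Ws_fib Phi p \<Longrightarrow> z \<in> Ws_fib Phi q \<Longrightarrow> p = q"
begin

lemma Omega_plus_eqI: "p \<in> L \<Longrightarrow> z \<in> Ws_fib Phi p \<Longrightarrow> Omega_plus Phi L z = p"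
  unfolding Omega_plus_def by (rule the_equality) (auto intro: fibres_disjoint)

lemma Omega_plus_fibre:
  assumes "z \<in> Ws_set Phi L"
  shows "Omega_plus Phi L z \<in> L" "z \<in> Ws_fib Phi (Omega_plus Phi L z)"
proof -
  obtain p where "p \<in> L" "z \<in> Ws_fib Phi p" using assms unfolding Ws_set_def by blast
  with Omega_plus_eqI[OF this] show "Omega_plus Phi L z \<in> L" "z \<in> Ws_fib Phi (Omega_plus Phi L z)"
    by simp_all
qed

lemma Omega_plus_flow:
  assumes "z \<in> Ws_set Phi L"
  shows "Omega_plus Phi L (Phi t z) = Phi t (Omega_plus Phi L z)"
proof (rule Omega_plus_eqI)
  show "Phi t (Omega_plus Phi L z) \<in> L"
    using Omega_plus_fibre(1)[OF assms] by (rule invariant)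
  show "Phi t z \<in> Ws_fib Phi (Phi t (Omega_plus Phi L z))"
    using flow_add Omega_plus_fibre(2)[OF assms] by (rule Ws_fib_flow[where Phi = Phi])
qed

lemma Omega_plus_energy:
  fixes H :: "'m \<Rightarrow> real"
  assumes "compact L" "continuous_on UNIV H" "\<And>t z. H (Phi t z) = H z"
    and "z \<in> Ws_set Phi L"
  shows "H (Omega_plus Phi L z) = H z"
proof -
  note fibre = Omega_plus_fibre[OF \<open>z \<in> Ws_set Phi L\<close>]
  have lim: "((\<lambda>t. dist (Phi t z) (Phi t (Omega_plus Phi L z))) \<longlongrightarrow> 0) at_top"
    using fibre(2) by (simp add: Ws_fib_def)
  have "H z = H (Omega_plus Phi L z)"
    by (rule asymptotic_orbits_same_energy[where Phi = Phi and H = H,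
          OF assms(2,3,1) invariant[OF fibre(1)] lim]) simp
  then show ?thesis by simp
qed

end

locale fibration = stable: stable_fibration Phi L + unstable: stable_fibration "\<lambda>t. Phi (- t)" L
  for Phi :: "real \<Rightarrow> 'm::metric_space \<Rightarrow> 'm" and L :: "'m set"
begin

lemma Omega_minus_in: "z \<in> Wu_set Phi L \<Longrightarrow> Omega_minus Phi L z \<in> L"
  unfolding Omega_minus_reversed Wu_set_reversed by (rule unstable.Omega_plus_fibre(1))

lemma Omega_minus_flow:
  "z \<in> Wu_set Phi L \<Longrightarrow> Omega_minus Phi L (Phi t z) = Phi t (Omega_minus Phi L z)"
  using unstable.Omega_plus_flow[of z "- t"] unfolding Omega_minus_reversed Wu_set_reversed by simp

lemma Omega_minus_energy:
  fixes H :: "'m \<Rightarrow> real"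
  assumes "compact L" "continuous_on UNIV H" "\<And>t z. H (Phi t z) = H z"
    and "z \<in> Wu_set Phi L"
  shows "H (Omega_minus Phi L z) = H z"
  using unstable.Omega_plus_energy[where H = H, OF assms(1,2) assms(3) assms(4)[unfolded Wu_set_reversed]]
  unfolding Omega_minus_reversed .

end

lemma fibrationI:
  assumes flow_add: "\<And>s t z. Phi (s + t) z = Phi s (Phi t z)"
    and invariant: "\<And>t p. p \<in> L \<Longrightarrow> Phi t p \<in> L"
    and Ws_disjoint: "\<And>p q. p \<in> L \<Longrightarrow> q \<in> L \<Longrightarrow> Ws_fib Phi p \<inter> Ws_fib Phi q \<noteq> {} \<Longrightarrow> p = q"
    and Wu_disjoint: "\<And>p q. p \<in> L \<Longrightarrow> q \<in> L \<Longrightarrow> Wu_fib Phi p \<inter> Wu_fib Phi q \<noteq> {} \<Longrightarrow> p = q"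
  shows "fibration Phi L"
proof unfold_locales
  show "Phi (- (s + t)) z = Phi (- s) (Phi (- t) z)" for s t z
    using flow_add by (metis minus_add_distrib)
  show "p = q" if "p \<in> L" "q \<in> L" "z \<in> Ws_fib Phi p" "z \<in> Ws_fib Phi q" for p q z
    using that Ws_disjoint by blast
  show "p = q" if "p \<in> L" "q \<in> L"
    and "z \<in> Ws_fib (\<lambda>t. Phi (- t)) p" "z \<in> Ws_fib (\<lambda>t. Phi (- t)) q" for p q z
    using that Wu_disjoint unfolding Wu_fib_reversed[symmetric] by blast
qed (use flow_add invariant in auto)

lemma angle_eq_diff: "angle_eq a b \<Longrightarrow> angle_eq c d \<Longrightarrow> angle_eq (a - c) (b - d)"
proof -
  assume "angle_eq a b" "angle_eq c d"
  then obtain k l :: int where "a - b = 2 * pi * k" "c - d = 2 * pi * l"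
    unfolding angle_eq_def by blast
  then have "(a - c) - (b - d) = 2 * pi * of_int (k - l)" by (simp add: algebra_simps)
  then show ?thesis unfolding angle_eq_def by blast
qed

lemma angle_eq_add_left: "angle_eq a b \<Longrightarrow> angle_eq (c + a) (c + b)"
  by (simp add: angle_eq_def)

lemma (in fibration) angle_mismatch_flow:
  assumes rotation: "\<And>p t. p \<in> C \<Longrightarrow> angle_eq (th (Phi t p)) (th p + w * t)"
    and "z \<in> Wu_set Phi L" "z \<in> Ws_set Phi L"
    and "Omega_minus Phi L z \<in> C" "Omega_plus Phi L z \<in> C"
  shows "angle_eq (th (Omega_plus Phi L (Phi t z)) - th (Omega_minus Phi L (Phi t z)))
    (th (Omega_plus Phi L z) - th (Omega_minus Phi L z))"
  unfolding Omega_minus_flow[OF assms(2)] stable.Omega_plus_flow[OF assms(3)]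
  using angle_eq_diff[OF rotation[OF assms(5)] rotation[OF assms(4)], of t t] by simp

lemma scattering_apply:
  assumes "inj_on (Omega_minus Phi L) G" "z \<in> G"
  shows "scattering Phi L G (Omega_minus Phi L z) = Omega_plus Phi L z"
  using assms by (simp add: scattering_def)

lemma family_member_eq_level:
  assumes "\<forall>c\<in>C. A c \<subseteq> {z. H z = c}" "c \<in> C"
  shows "A c = {p \<in> (\<Union>c'\<in>C. A c'). H p = c}"
proof
  show "A c \<subseteq> {p \<in> (\<Union>c'\<in>C. A c'). H p = c}" using assms by blast
  show "{p \<in> (\<Union>c'\<in>C. A c'). H p = c} \<subseteq> A c"
  proof
    fix p assume "p \<in> {p \<in> (\<Union>c'\<in>C. A c'). H p = c}"
    then obtain c' where "c' \<in> C" "p \<in> A c'" "H p = c" by blast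
    with assms(1) show "p \<in> A c" by auto
  qed
qed

theorem proposition4p5:
  fixes Phi :: "real \<Rightarrow> 'm::metric_space \<Rightarrow> 'm"
    and H :: "'m \<Rightarrow> real"
    and Lam :: "'m set" and lam :: "real \<Rightarrow> 'm set"
    and D :: "real set" and a b :: real
    and I th :: "'m \<Rightarrow> real" and Ih omega :: "real \<Rightarrow> real"
    and Gamma :: "'m set" and thu ths :: "'m \<Rightarrow> real"
    and h :: real and z0 :: 'm
  assumes flow0: "\<forall>z. Phi 0 z = z"
    and flow_add: "\<forall>s t z. Phi (s + t) z = Phi s (Phi t z)"
    and flow_cont: "\<forall>t. continuous_on UNIV (Phi t)"
    and H_cont: "continuous_on UNIV H"
    and H_inv: "\<forall>t z. H (Phi t z) = H z"
    and D_def: "D = {a..b}" and ab: "a < b"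
    and lam_energy: "\<forall>h'\<in>D. lam h' \<subseteq> {z. H z = h'}"
    and lam_nonempty: "\<forall>h'\<in>D. lam h' \<noteq> {}"
    and lam_compact: "\<forall>h'\<in>D. compact (lam h')"
    and lam_invariant: "\<forall>h'\<in>D. \<forall>t. Phi t ` lam h' \<subseteq> lam h'"
    and Lam_def: "Lam = (\<Union>h'\<in>D. lam h')"
    and Lam_compact: "compact Lam"
    and lam_action: "\<forall>h'\<in>D. lam h' = {p \<in> Lam. I p = Ih h'}"
    and aa_inj: "\<forall>p\<in>Lam. \<forall>q\<in>Lam. I p = I q \<and> angle_eq (th p) (th q) \<longrightarrow> p = q"
    and aa_surj: "\<forall>h'\<in>D. \<forall>\<theta>. \<exists>p\<in>lam h'. angle_eq (th p) \<theta>"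
    and rotation: "\<forall>h'\<in>D. \<forall>p\<in>lam h'. \<forall>t. angle_eq (th (Phi t p)) (th p + omega h' * t)"
    and fib_s_disj: "\<forall>p\<in>Lam. \<forall>q\<in>Lam. Ws_fib Phi p \<inter> Ws_fib Phi q \<noteq> {} \<longrightarrow> p = q"
    and fib_u_disj: "\<forall>p\<in>Lam. \<forall>q\<in>Lam. Wu_fib Phi p \<inter> Wu_fib Phi q \<noteq> {} \<longrightarrow> p = q"
    and Gamma_sub: "Gamma \<subseteq> Wu_set Phi Lam \<inter> Ws_set Phi Lam"
    and Gamma_inj: "inj_on (Omega_minus Phi Lam) Gamma"
    and Gamma_orbit: "\<forall>h'\<in>D. \<forall>z\<in>Gamma \<inter> {w. H w = h'}. \<exists>J. is_interval J \<and> 0 \<in> J \<and>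
                        Gamma \<inter> {w. H w = h'} = (\<lambda>t. Phi t z) ` J"
    and thu_def: "\<forall>z\<in>Wu_set Phi Lam. thu z = th (Omega_minus Phi Lam z)"
    and ths_def: "\<forall>z\<in>Ws_set Phi Lam. ths z = th (Omega_plus Phi Lam z)"
    and h: "h \<in> D"
    and z0: "z0 \<in> Gamma" "H z0 = h"
  shows "(\<forall>z\<in>Gamma \<inter> {w. H w = h}. angle_eq (ths z - thu z) (ths z0 - thu z0))
       \<and> (\<forall>p\<in>Omega_minus Phi Lam ` Gamma. I p = Ih h \<longrightarrow>
            I (scattering Phi Lam Gamma p) = Ih h
          \<and> angle_eq (th (scattering Phi Lam Gamma p)) (th p + (ths z0 - thu z0)))"
proof -
  let ?Wu = "Omega_minus Phi Lam" and ?Ws = "Omega_plus Phi Lam"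
  have Lam_invariant: "Phi t p \<in> Lam" if "p \<in> Lam" for t p
    using that lam_invariant unfolding Lam_def by blast
  interpret fibration Phi Lam
    using flow_add Lam_invariant fib_s_disj fib_u_disj by (intro fibrationI) blast+
  have lam_level: "lam h = {p \<in> Lam. H p = h}"
    unfolding Lam_def using lam_energy h by (rule family_member_eq_level)
  have Gamma_u: "z \<in> Wu_set Phi Lam" and Gamma_s: "z \<in> Ws_set Phi Lam" if "z \<in> Gamma" for z
    using that Gamma_sub by auto
  have base_points: "?Wu z \<in> Lam" "H (?Wu z) = H z" "?Ws z \<in> Lam" "H (?Ws z) = H z"
    "thu z = th (?Wu z)" "ths z = th (?Ws z)" if "z \<in> Gamma" for z
    using Omega_minus_in[OF Gamma_u[OF that]] stable.Omega_plus_fibre(1)[OF Gamma_s[OF that]]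
      Omega_minus_energy[where H = H, OF Lam_compact H_cont H_inv[rule_format] Gamma_u[OF that]]
      stable.Omega_plus_energy[where H = H, OF Lam_compact H_cont H_inv[rule_format] Gamma_s[OF that]]
      thu_def Gamma_u[OF that] ths_def Gamma_s[OF that]
    by simp_all
  have mismatch: "angle_eq (ths z - thu z) (ths z0 - thu z0)" if "z \<in> Gamma" "H z = h" for z
  proof -
    obtain J where J: "Gamma \<inter> {w. H w = h} = (\<lambda>t. Phi t z0) ` J"
      using Gamma_orbit[rule_format, OF h, of z0] z0 by blast
    have "z \<in> (\<lambda>t. Phi t z0) ` J" using that by (simp add: J[symmetric])
    then obtain t where t: "z = Phi t z0" by blast
    have "?Wu z0 \<in> lam h" "?Ws z0 \<in> lam h"
      using base_points[OF z0(1)] z0(2) lam_level by auto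
    then have "angle_eq (th (?Ws z) - th (?Wu z)) (th (?Ws z0) - th (?Wu z0))"
      unfolding t using rotation h Gamma_u[OF z0(1)] Gamma_s[OF z0(1)]
      by (intro angle_mismatch_flow[where C = "lam h" and w = "omega h"]) auto
    then show ?thesis using base_points[OF that(1)] base_points[OF z0(1)] by simp
  qed
  have "I (scattering Phi Lam Gamma p) = Ih h
      \<and> angle_eq (th (scattering Phi Lam Gamma p)) (th p + (ths z0 - thu z0))"
    if p: "p \<in> ?Wu ` Gamma" "I p = Ih h" for p
  proof -
    obtain z where z: "z \<in> Gamma" "p = ?Wu z" using p(1) by blast
    have "p \<in> lam h" using base_points[OF z(1)] z(2) p(2) lam_action h by auto
    then have "H z = h" using base_points[OF z(1)] z(2) lam_level by auto
    then have "?Ws z \<in> lam h" using base_points[OF z(1)] lam_level by auto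
    then have "I (?Ws z) = Ih h" using lam_action h by auto
    have "th (?Ws z) = th p + (ths z - thu z)"
      using base_points[OF z(1)] z(2) by simp
    then have "angle_eq (th (?Ws z)) (th p + (ths z0 - thu z0))"
      using angle_eq_add_left[OF mismatch[OF z(1) \<open>H z = h\<close>]] by simp
    with \<open>I (?Ws z) = Ih h\<close> show ?thesis using scattering_apply[OF Gamma_inj z(1)] z(2) by simp
  qed
  with mismatch show ?thesis by blast
qed

end
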